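(* Let $\mathcal{N}_{A,n}$ be the number of vertices of $\mathcal{T}_n$ at distance $D_n$ from $(0,0)$. Then $\mathcal{N}_{A,1}=3$, $\mathcal{N}_{A,2}=9$, and for $n>2$, $\mathcal{N}_{A,n}=6$ if $n$ is odd and $\mathcal{N}_{A,n}=12$ if $n$ is even.
   Context: For $n\in\mathbb{N}$ let $G_n=\mathbb{Z}_{2^n}\times\mathbb{Z}_{2^n}$ (additive group). Let $S=\{\pm(1,0),\pm(0,1),\pm(1,1)\}$. The undirected graph $\mathcal{T}_n$ is the Cayley graph $\Gamma(G_n,S)$: vertex set $G_n$, each vertex $u$ adjacent to $u+s$ for every $s\in S$ (arithmetic modulo $2^n$). $D_n$ denotes the diameter of $\mathcal{T}_n$ (maximum over pairs of vertices of shortest-path length). *)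

theory Defs
  imports Main
begin

text \<open>The torus group G_n = Z_{2^n} x Z_{2^n}, represented by integer pairs with
  coordinates in {0..<2^n}; arithmetic is modulo 2^n.\<close>

definition tri_vertices :: "nat \<Rightarrow> (int \<times> int) set" where
  "tri_vertices n = {0..<2^n} \<times> {0..<2^n}"

definition tri_gens :: "(int \<times> int) set" where
  "tri_gens = {(1,0), (-1,0), (0,1), (0,-1), (1,1), (-1,-1)}"

definition tri_add :: "nat \<Rightarrow> int \<times> int \<Rightarrow> int \<times> int \<Rightarrow> int \<times> int" where
  "tri_add n u s = ((fst u + fst s) mod 2^n, (snd u + snd s) mod 2^n)"

definition tri_adj :: "nat \<Rightarrow> int \<times> int \<Rightarrow> int \<times> int \<Rightarrow> bool" where
  "tri_adj n u v \<longleftrightarrow> (\<exists>s\<in>tri_gens. v = tri_add n u s)"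

inductive walk :: "nat \<Rightarrow> nat \<Rightarrow> int \<times> int \<Rightarrow> int \<times> int \<Rightarrow> bool" for n where
  walk_nil: "walk n 0 u u"
| walk_step: "walk n k u v \<Longrightarrow> tri_adj n v w \<Longrightarrow> walk n (Suc k) u w"

text \<open>Shortest-path distance (the graph is connected).\<close>
definition tri_dist :: "nat \<Rightarrow> int \<times> int \<Rightarrow> int \<times> int \<Rightarrow> nat" where
  "tri_dist n u v = (LEAST k. walk n k u v)"

definition tri_diam :: "nat \<Rightarrow> nat" where
  "tri_diam n = Max {tri_dist n u v | u v. u \<in> tri_vertices n \<and> v \<in> tri_vertices n}"

definition N_A :: "nat \<Rightarrow> nat" where
  "N_A n = card {v \<in> tri_vertices n. tri_dist n (0,0) v = tri_diam n}"

end

theory Submission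
  imports Defs
begin

text \<open>The word length of \<open>(a, b)\<close> in \<open>\<int>\<^sup>2\<close> with respect to \<open>S\<close> is the hexagonal norm
  \<open>max |a| |b| |a - b|\<close>, so the distance in \<open>\<T>\<^sub>n\<close> between two vertices is the least hexagonal
  norm of a lift of their difference. For a difference \<open>(x, y)\<close> in the box \<open>[0, N)\<^sup>2\<close>, \<open>N = 2\<^sup>n\<close>,
  every lift other than the four with coordinates \<open>x\<close> or \<open>x - N\<close> and \<open>y\<close> or \<open>y - N\<close> has
  norm at least \<open>N\<close>, which gives a piecewise linear formula for the distance. It never exceeds
  \<open>2N/3\<close> and reaches \<open>\<lfloor>2N/3\<rfloor>\<close> at \<open>(\<lfloor>N/3\<rfloor>, \<lfloor>2N/3\<rfloor>)\<close>, so that is the diameter; solving for the points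
  where it is attained leaves 6 points when \<open>N = 3q + 2\<close> (odd \<open>n\<close>) and 12 when \<open>N = 3q + 1\<close>
  (even \<open>n\<close>), some of which fall outside the box when \<open>n \<le> 2\<close>.\<close>

definition hex_norm :: "int \<Rightarrow> int \<Rightarrow> int" where
  "hex_norm a b = max \<bar>a\<bar> (max \<bar>b\<bar> \<bar>a - b\<bar>)"

lemma hex_norm_nonneg: "0 \<le> hex_norm a b"
  by (simp add: hex_norm_def)

lemma hex_norm_eq_0_iff: "hex_norm a b = 0 \<longleftrightarrow> a = 0 \<and> b = 0"
  by (auto simp: hex_norm_def max_def)

lemma hex_norm_add_gen_le:
  "s \<in> tri_gens \<Longrightarrow> hex_norm (a + fst s) (b + snd s) \<le> hex_norm a b + 1"
  unfolding tri_gens_def hex_norm_def by auto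

lemma hex_norm_diff_gen_eq:
  assumes "(a, b) \<noteq> (0, 0)"
  obtains s where "s \<in> tri_gens" "hex_norm (a - fst s) (b - snd s) = hex_norm a b - 1"
proof -
  consider "a > 0" "b > 0" | "a < 0" "b < 0"
    | "a \<noteq> 0" "\<not> (a > 0 \<and> b > 0)" "\<not> (a < 0 \<and> b < 0)" | "a = 0" "b \<noteq> 0"
    using assms by fastforce
  then show ?thesis
  proof cases
    case 1 then show ?thesis by (intro that[of "(1, 1)"]) (auto simp: tri_gens_def hex_norm_def)
  next
    case 2 then show ?thesis by (intro that[of "(-1, -1)"]) (auto simp: tri_gens_def hex_norm_def)
  next
    case 3 then show ?thesis by (intro that[of "(sgn a, 0)"]) (auto simp: tri_gens_def hex_norm_def sgn_if)
  next
    case 4 then show ?thesis by (intro that[of "(0, sgn b)"]) (auto simp: tri_gens_def hex_norm_def sgn_if)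
  qed
qed

lemma walk_displacement:
  assumes "walk n k u v"
  shows "\<exists>a b. hex_norm a b \<le> int k \<and> fst v mod 2^n = (fst u + a) mod 2^n
      \<and> snd v mod 2^n = (snd u + b) mod 2^n"
  using assms
proof (induction rule: walk.induct)
  case (walk_nil u)
  show ?case by (intro exI[of _ 0]) (simp add: hex_norm_def)
next
  case (walk_step k u v w)
  then obtain a b where ab: "hex_norm a b \<le> int k" "fst v mod 2^n = (fst u + a) mod 2^n"
      "snd v mod 2^n = (snd u + b) mod 2^n" by blast
  obtain s where s: "s \<in> tri_gens" "w = tri_add n v s"
    using walk_step.hyps(2) by (auto simp: tri_adj_def)
  have "hex_norm (a + fst s) (b + snd s) \<le> int (Suc k)"
    using hex_norm_add_gen_le[OF s(1), of a b] ab(1) by simp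
  moreover have "fst w mod 2^n = (fst u + (a + fst s)) mod 2^n"
    using mod_add_cong[OF ab(2) refl, of "fst s"] by (simp add: s(2) tri_add_def add.assoc)
  moreover have "snd w mod 2^n = (snd u + (b + snd s)) mod 2^n"
    using mod_add_cong[OF ab(3) refl, of "snd s"] by (simp add: s(2) tri_add_def add.assoc)
  ultimately show ?case by blast
qed

lemma walk_hex_norm:
  assumes "u \<in> tri_vertices n" "hex_norm a b = int m"
  shows "walk n m u ((fst u + a) mod 2^n, (snd u + b) mod 2^n)"
  using assms(2)
proof (induction m arbitrary: a b)
  case 0
  then have "a = 0" "b = 0" using hex_norm_eq_0_iff by auto
  moreover have "fst u mod 2^n = fst u" "snd u mod 2^n = snd u"
    using assms(1) by (auto simp: tri_vertices_def)
  ultimately have "((fst u + a) mod 2^n, (snd u + b) mod 2^n) = u" by simp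
  then show ?case using walk_nil by metis
next
  case (Suc m)
  then have "(a, b) \<noteq> (0, 0)" by (auto simp: hex_norm_def)
  then obtain s where "s \<in> tri_gens" "hex_norm (a - fst s) (b - snd s) = hex_norm a b - 1"
    by (rule hex_norm_diff_gen_eq)
  then have s: "s \<in> tri_gens" "hex_norm (a - fst s) (b - snd s) = int m"
    using Suc.prems by simp_all
  let ?v = "((fst u + (a - fst s)) mod 2^n, (snd u + (b - snd s)) mod 2^n)"
  have "walk n m u ?v" using Suc.IH[OF s(2)] .
  moreover have "tri_add n ?v s = ((fst u + a) mod 2^n, (snd u + b) mod 2^n)"
    by (simp add: tri_add_def mod_add_left_eq)
  then have "tri_adj n ?v ((fst u + a) mod 2^n, (snd u + b) mod 2^n)"
    using s(1) unfolding tri_adj_def by metis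
  ultimately show ?case by (rule walk_step)
qed

definition torus_norm :: "int \<Rightarrow> int \<Rightarrow> int \<Rightarrow> int" where
  "torus_norm N x y = min (min (hex_norm x y) (hex_norm (x - N) y))
                          (min (hex_norm x (y - N)) (hex_norm (x - N) (y - N)))"

lemma torus_norm_nonneg: "0 \<le> torus_norm N x y"
  by (simp add: torus_norm_def hex_norm_nonneg)

lemma le_torus_norm_iff:
  assumes "0 \<le> x" "x < N" "0 \<le> y" "y < N"
  shows "d \<le> torus_norm N x y \<longleftrightarrow>
    d \<le> max x y \<and> d \<le> N - x + y \<and> d \<le> N + x - y \<and> d \<le> max (N - x) (max (N - y) \<bar>x - y\<bar>)"
proof -
  have "hex_norm x y = max x y" "hex_norm (x - N) y = N - x + y" "hex_norm x (y - N) = N + x - y"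
    "hex_norm (x - N) (y - N) = max (N - x) (max (N - y) \<bar>x - y\<bar>)"
    using assms unfolding hex_norm_def by (auto simp: max_def abs_if)
  then show ?thesis by (simp add: torus_norm_def)
qed

lemma three_torus_norm_le:
  assumes "0 \<le> x" "x < N" "0 \<le> y" "y < N"
  shows "3 * torus_norm N x y \<le> 2 * N"
  using le_torus_norm_iff[OF assms, of "torus_norm N x y"] assms
  by (auto simp: max_def abs_if split: if_splits)

lemma lift_cases:
  fixes a N :: int
  assumes "\<bar>a\<bar> < N" "a mod N = x"
  shows "a = x \<or> a = x - N"
proof (cases "0 \<le> a")
  case True
  then show ?thesis using assms by simp
next
  case False
  have "a mod N = (a + N) mod N" by simp
  also have "\<dots> = a + N" using False assms(1) by (intro mod_pos_pos_trivial) auto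
  finally have "a mod N = a + N" .
  then show ?thesis using assms by simp
qed

lemma torus_norm_le_hex_norm:
  assumes "0 \<le> x" "x < N" "0 \<le> y" "y < N" "a mod N = x" "b mod N = y"
  shows "torus_norm N x y \<le> hex_norm a b"
proof (cases "\<bar>a\<bar> < N \<and> \<bar>b\<bar> < N")
  case True
  then have "a = x \<or> a = x - N" "b = y \<or> b = y - N"
    using lift_cases assms(5,6) by blast+
  then show ?thesis by (auto simp: torus_norm_def)
next
  case False
  then have "N \<le> hex_norm a b" by (auto simp: hex_norm_def)
  moreover have "torus_norm N x y \<le> N"
    using three_torus_norm_le[OF assms(1-4)] assms(1,2) by linarith
  ultimately show ?thesis by linarith
qed

lemma torus_norm_attained:
  obtains a b where "hex_norm a b = torus_norm N x y" "a mod N = x mod N" "b mod N = y mod N"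
proof -
  have "torus_norm N x y \<in> {hex_norm x y, hex_norm (x - N) y, hex_norm x (y - N), hex_norm (x - N) (y - N)}"
    by (simp add: torus_norm_def min_def)
  then show ?thesis using that by auto
qed

lemma add_mod_eq_iff_mod_eq_diff:
  fixes c a d N :: int
  shows "(c + a) mod N = d mod N \<longleftrightarrow> a mod N = (d - c) mod N"
  by (simp add: mod_eq_dvd_iff algebra_simps)

lemma tri_dist_eq_torus_norm:
  assumes u: "u \<in> tri_vertices n" and v: "v \<in> tri_vertices n"
  shows "int (tri_dist n u v) = torus_norm (2^n) ((fst v - fst u) mod 2^n) ((snd v - snd u) mod 2^n)"
    (is "_ = torus_norm ?N ?x ?y")
proof -
  have box: "0 \<le> ?x" "?x < ?N" "0 \<le> ?y" "?y < ?N" by simp_all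
  have v_mod: "fst v mod ?N = fst v" "snd v mod ?N = snd v"
    using v by (auto simp: tri_vertices_def)
  have lower: "torus_norm ?N ?x ?y \<le> int k" if walk: "walk n k u v" for k
  proof -
    obtain a b where ab: "hex_norm a b \<le> int k" "fst v mod ?N = (fst u + a) mod ?N"
        "snd v mod ?N = (snd u + b) mod ?N"
      using walk_displacement[OF walk] by blast
    then have "a mod ?N = ?x" "b mod ?N = ?y"
      by (metis add_mod_eq_iff_mod_eq_diff)+
    then show ?thesis using torus_norm_le_hex_norm[OF box] ab(1) by fastforce
  qed
  obtain a b where ab: "hex_norm a b = torus_norm ?N ?x ?y" "a mod ?N = ?x" "b mod ?N = ?y"
    using torus_norm_attained[of ?N ?x ?y] by auto
  have "(fst u + a) mod ?N = fst v" "(snd u + b) mod ?N = snd v"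
    using ab(2,3) v_mod by (metis add_mod_eq_iff_mod_eq_diff)+
  then have "walk n (nat (torus_norm ?N ?x ?y)) u v"
    using walk_hex_norm[OF u, of a b] ab(1) torus_norm_nonneg by simp
  then have "tri_dist n u v \<le> nat (torus_norm ?N ?x ?y)" "walk n (tri_dist n u v) u v"
    unfolding tri_dist_def by (auto intro: Least_le LeastI)
  then show ?thesis using lower[of "tri_dist n u v"] torus_norm_nonneg[of ?N ?x ?y] by linarith
qed

lemma tri_dist_from_origin:
  assumes "v \<in> tri_vertices n"
  shows "int (tri_dist n (0, 0) v) = torus_norm (2^n) (fst v) (snd v)"
proof -
  have "(0, 0) \<in> tri_vertices n" by (simp add: tri_vertices_def)
  moreover have "fst v mod 2^n = fst v" "snd v mod 2^n = snd v"
    using assms by (auto simp: tri_vertices_def)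
  ultimately show ?thesis using tri_dist_eq_torus_norm[OF _ assms] by simp
qed

lemma third_points_bounds:
  fixes N :: int
  assumes "0 < N"
  shows "0 \<le> N div 3" "N div 3 < N" "0 \<le> 2 * N div 3" "2 * N div 3 < N"
  using assms by presburger+

lemma torus_norm_third_point:
  assumes "0 < N"
  shows "torus_norm N (N div 3) (2 * N div 3) = 2 * N div 3"
proof -
  note box = third_points_bounds[OF assms]
  have "3 * torus_norm N (N div 3) (2 * N div 3) \<le> 2 * N"
    by (rule three_torus_norm_le[OF box])
  moreover have "2 * N div 3 \<le> torus_norm N (N div 3) (2 * N div 3)"
    unfolding le_torus_norm_iff[OF box] using assms by (simp add: le_max_iff_disj) presburger
  ultimately show ?thesis by linarith
qed

lemma tri_diam_eq: "tri_diam n = nat (2 * 2^n div 3)"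
  unfolding tri_diam_def
proof (rule Max_eqI)
  let ?V = "tri_vertices n"
  have "{tri_dist n u v | u v. u \<in> ?V \<and> v \<in> ?V} = (\<lambda>(u, v). tri_dist n u v) ` (?V \<times> ?V)"
    by auto
  then show "finite {tri_dist n u v | u v. u \<in> ?V \<and> v \<in> ?V}"
    by (simp add: tri_vertices_def)
next
  fix d assume "d \<in> {tri_dist n u v | u v. u \<in> tri_vertices n \<and> v \<in> tri_vertices n}"
  then obtain u v where uv: "u \<in> tri_vertices n" "v \<in> tri_vertices n" "d = tri_dist n u v"
    by blast
  have "3 * torus_norm (2^n) ((fst v - fst u) mod 2^n) ((snd v - snd u) mod 2^n) \<le> 2 * 2^n"
    by (rule three_torus_norm_le) simp_all
  then show "d \<le> nat (2 * 2^n div 3)"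
    using tri_dist_eq_torus_norm[OF uv(1,2)] uv(3) by linarith
next
  let ?v = "((2::int)^n div 3, 2 * 2^n div 3)"
  have v: "?v \<in> tri_vertices n"
    using third_points_bounds[of "2^n"] by (simp add: tri_vertices_def)
  then have "int (tri_dist n (0, 0) ?v) = 2 * 2^n div 3"
    using tri_dist_from_origin[OF v] torus_norm_third_point[of "2^n"] by simp
  then have "tri_dist n (0, 0) ?v = nat (2 * 2^n div 3)" by (metis nat_int)
  moreover have "(0, 0) \<in> tri_vertices n" by (simp add: tri_vertices_def)
  ultimately show "nat (2 * 2^n div 3) \<in> {tri_dist n u v | u v. u \<in> tri_vertices n \<and> v \<in> tri_vertices n}"
    by (intro CollectI exI[of _ "(0, 0)"] exI[of _ ?v]) (simp add: v)
qed

lemma N_A_eq_card: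
  "N_A n = card {v \<in> tri_vertices n. torus_norm (2^n) (fst v) (snd v) = 2 * 2^n div 3}"
proof -
  have "0 \<le> 2 * (2::int)^n div 3" using third_points_bounds[of "2^n"] by simp
  then have "tri_dist n (0, 0) v = tri_diam n \<longleftrightarrow> torus_norm (2^n) (fst v) (snd v) = 2 * 2^n div 3"
    if "v \<in> tri_vertices n" for v
    using tri_dist_from_origin[OF that] tri_diam_eq by auto
  then show ?thesis unfolding N_A_def by (metis (no_types, lifting) mem_Collect_eq)
qed

definition antipodes_mod3_2 :: "int \<Rightarrow> (int \<times> int) set" where
  "antipodes_mod3_2 q =
    {(q, 2*q+1), (q+1, 2*q+1), (q+1, 2*q+2), (2*q+1, q), (2*q+1, q+1), (2*q+2, q+1)}"

definition antipodes_mod3_1 :: "int \<Rightarrow> (int \<times> int) set" where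
  "antipodes_mod3_1 q =
    {(q-1, 2*q), (q, 2*q), (q, 2*q+1), (q+1, 2*q), (q+1, 2*q+1), (q+1, 2*q+2),
     (2*q, q-1), (2*q, q), (2*q+1, q), (2*q, q+1), (2*q+1, q+1), (2*q+2, q+1)}"

lemma torus_norm_eq_iff_antipodes_mod3_2:
  assumes N: "N = 3*q + 2" and box: "0 \<le> x" "x < N" "0 \<le> y" "y < N"
  shows "torus_norm N x y = 2*q + 1 \<longleftrightarrow> (x, y) \<in> antipodes_mod3_2 q"
proof
  assume "torus_norm N x y = 2*q + 1"
  then have far: "2*q + 1 \<le> max x y" "2*q + 1 \<le> N - x + y" "2*q + 1 \<le> N + x - y"
      "2*q + 1 \<le> max (N - x) (max (N - y) \<bar>x - y\<bar>)"
    using le_torus_norm_iff[OF box, of "2*q + 1"] by auto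
  show "(x, y) \<in> antipodes_mod3_2 q"
  proof (cases "x \<le> y")
    case True
    have "2*q + 1 \<le> y" "x \<le> q + 1"
      using far(1,4) True box N by (auto simp: max_def abs_if split: if_splits)
    moreover have "y \<le> x + q + 1" using far(3) N by linarith
    ultimately have "(x = q \<and> y = 2*q+1) \<or> (x = q+1 \<and> y = 2*q+1) \<or> (x = q+1 \<and> y = 2*q+2)"
      by linarith
    then show ?thesis by (auto simp: antipodes_mod3_2_def)
  next
    case False
    have "2*q + 1 \<le> x" "y \<le> q + 1"
      using far(1,4) False box N by (auto simp: max_def abs_if split: if_splits)
    moreover have "x \<le> y + q + 1" using far(2) N by linarith
    ultimately have "(y = q \<and> x = 2*q+1) \<or> (y = q+1 \<and> x = 2*q+1) \<or> (y = q+1 \<and> x = 2*q+2)"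
      by linarith
    then show ?thesis by (auto simp: antipodes_mod3_2_def)
  qed
next
  assume "(x, y) \<in> antipodes_mod3_2 q"
  then have "2*q + 1 \<le> torus_norm N x y"
    using N box unfolding le_torus_norm_iff[OF box] by (auto simp: antipodes_mod3_2_def le_max_iff_disj)
  then show "torus_norm N x y = 2*q + 1"
    using three_torus_norm_le[OF box] N by linarith
qed

lemma torus_norm_eq_iff_antipodes_mod3_1:
  assumes N: "N = 3*q + 1" and box: "0 \<le> x" "x < N" "0 \<le> y" "y < N"
  shows "torus_norm N x y = 2*q \<longleftrightarrow> (x, y) \<in> antipodes_mod3_1 q"
proof
  assume "torus_norm N x y = 2*q"
  then have far: "2*q \<le> max x y" "2*q \<le> N - x + y" "2*q \<le> N + x - y"
      "2*q \<le> max (N - x) (max (N - y) \<bar>x - y\<bar>)"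
    using le_torus_norm_iff[OF box, of "2*q"] by auto
  show "(x, y) \<in> antipodes_mod3_1 q"
  proof (cases "x \<le> y")
    case True
    have "2*q \<le> y" "x \<le> q + 1"
      using far(1,4) True box N by (auto simp: max_def abs_if split: if_splits)
    moreover have "y \<le> x + q + 1" using far(3) N by linarith
    ultimately have "(x = q-1 \<and> y = 2*q) \<or> (x = q \<and> y = 2*q) \<or> (x = q \<and> y = 2*q+1) \<or>
        (x = q+1 \<and> y = 2*q) \<or> (x = q+1 \<and> y = 2*q+1) \<or> (x = q+1 \<and> y = 2*q+2)"
      by linarith
    then show ?thesis by (auto simp: antipodes_mod3_1_def)
  next
    case False
    have "2*q \<le> x" "y \<le> q + 1"
      using far(1,4) False box N by (auto simp: max_def abs_if split: if_splits)
    moreover have "x \<le> y + q + 1" using far(2) N by linarith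
    ultimately have "(y = q-1 \<and> x = 2*q) \<or> (y = q \<and> x = 2*q) \<or> (y = q \<and> x = 2*q+1) \<or>
        (y = q+1 \<and> x = 2*q) \<or> (y = q+1 \<and> x = 2*q+1) \<or> (y = q+1 \<and> x = 2*q+2)"
      by linarith
    then show ?thesis by (auto simp: antipodes_mod3_1_def)
  qed
next
  assume "(x, y) \<in> antipodes_mod3_1 q"
  then have "2*q \<le> torus_norm N x y"
    using N box unfolding le_torus_norm_iff[OF box] by (auto simp: antipodes_mod3_1_def le_max_iff_disj)
  then show "torus_norm N x y = 2*q"
    using three_torus_norm_le[OF box] N by linarith
qed

lemma N_A_antipodes_mod3_2:
  assumes "(2::int)^n = 3*q + 2"
  shows "N_A n = card (antipodes_mod3_2 q \<inter> tri_vertices n)"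
proof -
  have "2 * (2::int)^n div 3 = 2*q + 1" using assms by simp
  then have "{v \<in> tri_vertices n. torus_norm (2^n) (fst v) (snd v) = 2 * 2^n div 3}
      = antipodes_mod3_2 q \<inter> tri_vertices n"
    using torus_norm_eq_iff_antipodes_mod3_2[OF assms] by (auto simp: tri_vertices_def)
  then show ?thesis by (simp add: N_A_eq_card)
qed

lemma N_A_antipodes_mod3_1:
  assumes "(2::int)^n = 3*q + 1"
  shows "N_A n = card (antipodes_mod3_1 q \<inter> tri_vertices n)"
proof -
  have "2 * (2::int)^n div 3 = 2*q" using assms by simp
  then have "{v \<in> tri_vertices n. torus_norm (2^n) (fst v) (snd v) = 2 * 2^n div 3}
      = antipodes_mod3_1 q \<inter> tri_vertices n"
    using torus_norm_eq_iff_antipodes_mod3_1[OF assms] by (auto simp: tri_vertices_def)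
  then show ?thesis by (simp add: N_A_eq_card)
qed

lemma power_two_mod_three: "(2::int)^n mod 3 = (if even n then 1 else 2)"
proof (induction n)
  case (Suc n)
  have "(2::int)^Suc n mod 3 = 2 * (2^n mod 3) mod 3" by (simp add: mod_mult_right_eq)
  then show ?case using Suc by auto
qed simp

lemma N_A_odd:
  assumes "odd n" "n \<ge> 3"
  shows "N_A n = 6"
proof -
  define q where "q = (2::int)^n div 3"
  have N: "(2::int)^n = 3*q + 2"
    using power_two_mod_three[of n] assms(1) unfolding q_def by presburger
  have "(2::int)^3 \<le> 2^n" using assms(2) by (intro power_increasing) auto
  then have "1 \<le> q" using N by simp
  then have "antipodes_mod3_2 q \<inter> tri_vertices n = antipodes_mod3_2 q" "card (antipodes_mod3_2 q) = 6"
    using N by (auto simp: antipodes_mod3_2_def tri_vertices_def)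
  then show ?thesis using N_A_antipodes_mod3_2[OF N] by simp
qed

lemma N_A_even:
  assumes "even n" "n \<ge> 4"
  shows "N_A n = 12"
proof -
  define q where "q = (2::int)^n div 3"
  have N: "(2::int)^n = 3*q + 1"
    using power_two_mod_three[of n] assms(1) unfolding q_def by presburger
  have "(2::int)^4 \<le> 2^n" using assms(2) by (intro power_increasing) auto
  then have "2 \<le> q" using N by simp
  then have "antipodes_mod3_1 q \<inter> tri_vertices n = antipodes_mod3_1 q" "card (antipodes_mod3_1 q) = 12"
    using N by (auto simp: antipodes_mod3_1_def tri_vertices_def)
  then show ?thesis using N_A_antipodes_mod3_1[OF N] by simp
qed

theorem mainTheorem6:
  shows "N_A 1 = 3 \<and> N_A 2 = 9 \<and>
    (\<forall>n::nat. n > 2 \<longrightarrow> N_A n = (if odd n then 6 else 12))"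
proof (intro conjI allI impI)
  have "antipodes_mod3_2 0 \<inter> tri_vertices 1 = {(0, 1), (1, 0), (1, 1)}"
    by (auto simp: antipodes_mod3_2_def tri_vertices_def)
  then show "N_A 1 = 3" using N_A_antipodes_mod3_2[of 1 0] by simp
  have "antipodes_mod3_1 1 \<inter> tri_vertices 2 =
      {(0, 2), (1, 2), (1, 3), (2, 0), (2, 1), (2, 2), (2, 3), (3, 1), (3, 2)}"
    by (auto simp: antipodes_mod3_1_def tri_vertices_def)
  then show "N_A 2 = 9" using N_A_antipodes_mod3_1[of 2 1] by simp
  fix n :: nat
  assume "n > 2"
  then show "N_A n = (if odd n then 6 else 12)"
    using N_A_odd[of n] N_A_even[of n] by (cases "even n") presburger+
qed

end
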